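(* For every $\alpha\in[3,\omega]$, the set $\mathsf{W}^N_3$ is first-order definable (without parameters) in the structure $(\mathsf{W}^N_\alpha,\prec,\Diamond_1,\Diamond_3)$.
   Context: Words are finite strings over $\mathbb{N}$; $\mathsf{W}_\omega$ is the set of all words, $\Lambda$ the empty word, $AB$ concatenation. For $k\in\mathbb{N}$, $\mathsf{S}_k$ is the set of words all of whose symbols are $\ge k$; for $\alpha\in\mathbb{N}\cup\{\omega\}$, $\mathsf{W}_\alpha$ is the set of words all of whose symbols are $\le\alpha$. Given a linear preorder $\precsim$ with $A\sim B$ iff $A\precsim B\wedge B\precsim A$ and $A\prec B$ iff $A\precsim B\wedge\neg B\precsim A$, a finite sequence $(A_1,\dots,A_p)$ is lexicographically not greater than $(B_1,\dots,B_q)$ iff either $p\le q$ and $A_i\sim B_i$ for all $i\le p$, or there is $s<\min(p,q)$ with $A_i\sim B_i$ for $i\le s$ and $A_{s+1}\prec B_{s+1}$. A lexicographically maximal subsequence of a finite sequence is a subsequence that is lexicographically not less than every subsequence. The linear preorder $\precsim$ on $\mathsf{W}_\omega$ is defined by recursion on (largest symbol of $AB$) $-$ (smallest symbol of $AB$): $\Lambda\precsim\Lambda$; if $AB$ is nonempty with minimal symbol $n$, write uniquely $A=A_1n\cdots nA_k$, $B=B_1n\cdots nB_l$ ($k,l\ge1$) with $A_i,B_j\in\mathsf{S}_{n+1}$ (possibly empty); let $C,D$ be lexicographically maximal subsequences of $(A_1,\dots,A_k)$, $(B_1,\dots,B_l)$; then $A\precsim B$ iff $C$ is lexicographically not greater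 than $D$. The set $\mathsf{NF}$: $\Lambda\in\mathsf{NF}$; a word with minimal symbol $n$, written $A_1n\cdots nA_k$ with $k\ge2$, $A_i\in\mathsf{S}_{n+1}$, is in $\mathsf{NF}$ iff $A_k\precsim\dots\precsim A_1$ and all $A_i\in\mathsf{NF}$. Every word is $\sim$-equivalent to exactly one word of $\mathsf{NF}$. For $A\in\mathsf{NF}$, $\Diamond_nA$ is the unique word of $\mathsf{NF}$ equivalent to $An$. $\mathsf{W}^N_\alpha=\mathsf{W}_\alpha\cap\mathsf{NF}$. *)

theory Defs
  imports Main "HOL-Library.Extended_Nat"
begin

(* Words: finite strings over nat; \<Lambda> = [] ; concatenation = @ *)
type_synonym word = "nat list"

definition S :: "nat \<Rightarrow> word set" where
  "S k = {A. \<forall>x\<in>set A. k \<le> x}"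

(* W_alpha for alpha \<in> N \<union> {omega}, omega = \<infinity> *)
definition W :: "enat \<Rightarrow> word set" where
  "W \<alpha> = {A. \<forall>x\<in>set A. enat x \<le> \<alpha>}"

(* unique decomposition A = A_1 n A_2 n ... n A_k with n not occurring in the A_i *)
fun pieces :: "nat \<Rightarrow> word \<Rightarrow> word list" where
  "pieces n [] = [[]]"
| "pieces n (x # xs) =
     (if x = n then [] # pieces n xs
      else (case pieces n xs of [] \<Rightarrow> [[x]] | p # ps \<Rightarrow> (x # p) # ps))"

definition eqv :: "('a \<Rightarrow> 'a \<Rightarrow> bool) \<Rightarrow> 'a \<Rightarrow> 'a \<Rightarrow> bool" where
  "eqv r a b \<longleftrightarrow> r a b \<and> r b a"

definition strict :: "('a \<Rightarrow> 'a \<Rightarrow> bool) \<Rightarrow> 'a \<Rightarrow> 'a \<Rightarrow> bool" where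
  "strict r a b \<longleftrightarrow> r a b \<and> \<not> r b a"

definition lexle :: "('a \<Rightarrow> 'a \<Rightarrow> bool) \<Rightarrow> 'a list \<Rightarrow> 'a list \<Rightarrow> bool" where
  "lexle r xs ys \<longleftrightarrow>
     (length xs \<le> length ys \<and> (\<forall>i<length xs. eqv r (xs ! i) (ys ! i)))
   \<or> (\<exists>s < min (length xs) (length ys).
        (\<forall>i<s. eqv r (xs ! i) (ys ! i)) \<and> strict r (xs ! s) (ys ! s))"

definition lexmax :: "('a \<Rightarrow> 'a \<Rightarrow> bool) \<Rightarrow> 'a list \<Rightarrow> 'a list \<Rightarrow> bool" where
  "lexmax r xs C \<longleftrightarrow> C \<in> set (subseqs xs) \<and>
     (\<forall>D \<in> set (subseqs xs). \<not> strict (lexle r) C D)"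

definition width :: "word \<Rightarrow> nat" where
  "width A = (if A = [] then 0 else Max (set A) - Min (set A))"

(* The recursion of the paper, run with a fuel argument; the fuel
   Suc (width (A @ B)) used below is always sufficient, so this is exactly
   the recursion on width(AB) of the paper. *)
primrec wleF :: "nat \<Rightarrow> word \<Rightarrow> word \<Rightarrow> bool" where
  "wleF 0 A B = True"
| "wleF (Suc d) A B =
     (if A @ B = [] then True
      else (let n = Min (set (A @ B));
                C = (SOME C. lexmax (wleF d) (pieces n A) C);
                D = (SOME D. lexmax (wleF d) (pieces n B) D)
            in lexle (wleF d) C D))"

definition wle :: "word \<Rightarrow> word \<Rightarrow> bool" where
  "wle A B = wleF (Suc (width (A @ B))) A B"

definition wless :: "word \<Rightarrow> word \<Rightarrow> bool" where
  "wless A B \<longleftrightarrow> wle A B \<and> \<not> wle B A"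

definition wequiv :: "word \<Rightarrow> word \<Rightarrow> bool" where
  "wequiv A B \<longleftrightarrow> wle A B \<and> wle B A"

inductive_set NF :: "word set" where
  NF_Nil: "[] \<in> NF"
| NF_step: "A \<noteq> [] \<Longrightarrow>
     (\<forall>i. Suc i < length (pieces (Min (set A)) A) \<longrightarrow>
          wle (pieces (Min (set A)) A ! Suc i) (pieces (Min (set A)) A ! i)) \<Longrightarrow>
     (\<forall>P \<in> set (pieces (Min (set A)) A). P \<in> NF) \<Longrightarrow> A \<in> NF"

definition diamond :: "nat \<Rightarrow> word \<Rightarrow> word" where
  "diamond n A = (THE B. B \<in> NF \<and> wequiv B (A @ [n]))"

definition WN :: "enat \<Rightarrow> word set" where
  "WN \<alpha> = W \<alpha> \<inter> NF"

(* First-order language with a binary relation symbol (\<prec>) and two unary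
   function symbols (\<Diamond>_1, \<Diamond>_3), equality built in. *)
datatype fterm = FVar nat | FD1 fterm | FD3 fterm

datatype fform =
    FEq fterm fterm
  | FLess fterm fterm
  | FNot fform
  | FAnd fform fform
  | FEx nat fform

fun tvars :: "fterm \<Rightarrow> nat set" where
  "tvars (FVar x) = {x}"
| "tvars (FD1 t) = tvars t"
| "tvars (FD3 t) = tvars t"

fun fvars :: "fform \<Rightarrow> nat set" where
  "fvars (FEq s t) = tvars s \<union> tvars t"
| "fvars (FLess s t) = tvars s \<union> tvars t"
| "fvars (FNot \<phi>) = fvars \<phi>"
| "fvars (FAnd \<phi> \<psi>) = fvars \<phi> \<union> fvars \<psi>"
| "fvars (FEx x \<phi>) = fvars \<phi> - {x}"

fun teval :: "('a \<Rightarrow> 'a) \<Rightarrow> ('a \<Rightarrow> 'a) \<Rightarrow> (nat \<Rightarrow> 'a) \<Rightarrow> fterm \<Rightarrow> 'a" where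
  "teval f1 f3 e (FVar x) = e x"
| "teval f1 f3 e (FD1 t) = f1 (teval f1 f3 e t)"
| "teval f1 f3 e (FD3 t) = f3 (teval f1 f3 e t)"

fun sat :: "'a set \<Rightarrow> ('a \<Rightarrow> 'a \<Rightarrow> bool) \<Rightarrow> ('a \<Rightarrow> 'a) \<Rightarrow> ('a \<Rightarrow> 'a)
             \<Rightarrow> (nat \<Rightarrow> 'a) \<Rightarrow> fform \<Rightarrow> bool" where
  "sat M lt f1 f3 e (FEq s t) = (teval f1 f3 e s = teval f1 f3 e t)"
| "sat M lt f1 f3 e (FLess s t) = lt (teval f1 f3 e s) (teval f1 f3 e t)"
| "sat M lt f1 f3 e (FNot \<phi>) = (\<not> sat M lt f1 f3 e \<phi>)"
| "sat M lt f1 f3 e (FAnd \<phi> \<psi>) = (sat M lt f1 f3 e \<phi> \<and> sat M lt f1 f3 e \<psi>)"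
| "sat M lt f1 f3 e (FEx x \<phi>) = (\<exists>a\<in>M. sat M lt f1 f3 (e(x := a)) \<phi>)"

(* X is definable without parameters in (M, lt, f1, f3): by a formula whose
   only free variable is 0 *)
definition fo_definable :: "'a set \<Rightarrow> ('a \<Rightarrow> 'a \<Rightarrow> bool) \<Rightarrow> ('a \<Rightarrow> 'a) \<Rightarrow> ('a \<Rightarrow> 'a)
                             \<Rightarrow> 'a set \<Rightarrow> bool" where
  "fo_definable M lt f1 f3 X \<longleftrightarrow>
     (\<exists>\<phi>. fvars \<phi> \<subseteq> {0} \<and>
          (\<forall>e. (\<forall>x. e x \<in> M) \<longrightarrow> (e 0 \<in> X \<longleftrightarrow> sat M lt f1 f3 e \<phi>)))"

end

theory Submission
  imports Defs "HOL-Library.Sublist"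
begin

(* Call a word y of a structure M 3-closed if some element of M lies below y and
   \<Diamond>\<^sub>3 z \<prec> y for every z \<prec> y in M.  The one-letter word 4 is 3-closed: a word is
   below 4 iff all its symbols are at most 3, and then so are those of z 3 \<sim> \<Diamond>\<^sub>3 z.
   No y \<prec> 4 is 3-closed: if y = z k then z \<prec> y and, as k \<le> 3, y \<precsim> z 3 \<sim> \<Diamond>\<^sub>3 z, where
   z is again a normal form.  So for \<alpha> \<ge> 4 the word 4 is the least 3-closed element of
   W\<^sup>N\<^sub>\<alpha>, and W\<^sup>N\<^sub>3 is the set of elements below it.  The substance lies in showing
   that \<precsim> is a total preorder obeying its defining recursion at every lower bound of the
   symbols (by induction on the size of the alphabet) and that normal forms exist, are unique
   and are closed under deleting the last letter. *)

section \<open>Total preorders and the lexicographic order\<close>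

definition total_preorder_on :: "'a set \<Rightarrow> ('a \<Rightarrow> 'a \<Rightarrow> bool) \<Rightarrow> bool" where
  "total_preorder_on X r \<longleftrightarrow> reflp_on X r \<and> transp_on X r \<and> totalp_on X r"

lemma total_preorder_onI:
  assumes "\<And>a b. a \<in> X \<Longrightarrow> b \<in> X \<Longrightarrow> r a b \<or> r b a"
    and "\<And>a b c. a \<in> X \<Longrightarrow> b \<in> X \<Longrightarrow> c \<in> X \<Longrightarrow> r a b \<Longrightarrow> r b c \<Longrightarrow> r a c"
  shows "total_preorder_on X r"
  unfolding total_preorder_on_def reflp_on_def transp_on_def totalp_on_def
  using assms by blast

lemma total_preorder_on_refl: "total_preorder_on X r \<Longrightarrow> a \<in> X \<Longrightarrow> r a a"
  unfolding total_preorder_on_def reflp_on_def by blast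

lemma total_preorder_on_total:
  "total_preorder_on X r \<Longrightarrow> a \<in> X \<Longrightarrow> b \<in> X \<Longrightarrow> r a b \<or> r b a"
  unfolding total_preorder_on_def reflp_on_def totalp_on_def by (cases "a = b") auto

lemma total_preorder_on_trans:
  "total_preorder_on X r \<Longrightarrow> a \<in> X \<Longrightarrow> b \<in> X \<Longrightarrow> c \<in> X \<Longrightarrow> r a b \<Longrightarrow> r b c \<Longrightarrow> r a c"
  unfolding total_preorder_on_def transp_on_def by blast

lemma total_preorder_on_subset: "total_preorder_on X r \<Longrightarrow> Y \<subseteq> X \<Longrightarrow> total_preorder_on Y r"
  unfolding total_preorder_on_def reflp_on_def transp_on_def totalp_on_def by blast

lemma total_preorder_on_greatest:
  assumes "total_preorder_on X r" "finite X" "X \<noteq> {}"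
  obtains g where "g \<in> X" "\<And>x. x \<in> X \<Longrightarrow> r x g"
proof -
  obtain g where "g \<in> X" "\<forall>x\<in>X. x \<noteq> g \<longrightarrow> r x g"
    using Finite_Set.bex_greatest_element[OF assms(2,3)] assms(1)
    unfolding total_preorder_on_def by blast
  with that show thesis using total_preorder_on_refl[OF assms(1)] by metis
qed

lemma lexle_Nil [simp]: "lexle r [] ys"
  unfolding lexle_def by simp

lemma lexle_Cons_Nil [simp]: "\<not> lexle r (x # xs) []"
  unfolding lexle_def by simp

lemma lexle_Cons_Cons [simp]:
  "lexle r (x # xs) (y # ys) \<longleftrightarrow> strict r x y \<or> (eqv r x y \<and> lexle r xs ys)"
  unfolding lexle_def by (auto simp: All_less_Suc2 Ex_less_Suc2 strict_def eqv_def)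

lemma lexle_Cons_mono: "r x y \<Longrightarrow> lexle r xs ys \<Longrightarrow> lexle r (x # xs) (y # ys)"
  by (auto simp: strict_def eqv_def)

lemma lexle_append_self: "(\<And>a. a \<in> set xs \<Longrightarrow> r a a) \<Longrightarrow> lexle r xs (xs @ ys)"
  by (induction xs) (auto simp: eqv_def)

lemma not_lexle_append_self: "ys \<noteq> [] \<Longrightarrow> \<not> lexle r (xs @ ys) xs"
  by (induction xs) (auto simp: strict_def eqv_def neq_Nil_conv)

lemma lexle_append_left:
  "(\<And>a. a \<in> set zs \<Longrightarrow> r a a) \<Longrightarrow> lexle r (zs @ xs) (zs @ ys) \<longleftrightarrow> lexle r xs ys"
  by (induction zs) (auto simp: strict_def eqv_def)

lemma lexle_antisym: "lexle r xs ys \<Longrightarrow> lexle r ys xs \<Longrightarrow> list_all2 (eqv r) xs ys"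
proof (induction xs arbitrary: ys)
  case (Cons x xs)
  then show ?case by (cases ys) (auto simp: strict_def eqv_def)
qed (simp add: lexle_def)

lemma list_all2_eqv_lexle: "list_all2 (eqv r) xs ys \<Longrightarrow> lexle r xs ys"
  by (induction rule: list_all2_induct) (auto simp: eqv_def intro: lexle_Cons_mono)

lemma lexle_antisym_iff: "lexle r xs ys \<and> lexle r ys xs \<longleftrightarrow> list_all2 (eqv r) xs ys"
proof -
  have "list_all2 (eqv r) xs ys \<Longrightarrow> list_all2 (eqv r) ys xs"
    by (simp add: list_all2_conv_all_nth eqv_def)
  then show ?thesis using lexle_antisym list_all2_eqv_lexle by blast
qed

lemma total_preorder_on_lexle:
  assumes "total_preorder_on X r"
  shows "total_preorder_on (lists X) (lexle r)"
proof (rule total_preorder_onI)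
  have total: "a \<in> X \<Longrightarrow> b \<in> X \<Longrightarrow> r a b \<or> r b a" for a b
    using total_preorder_on_total[OF assms] .
  have trans: "a \<in> X \<Longrightarrow> b \<in> X \<Longrightarrow> c \<in> X \<Longrightarrow> r a b \<Longrightarrow> r b c \<Longrightarrow> r a c" for a b c
    using total_preorder_on_trans[OF assms] .
  show "lexle r xs ys \<or> lexle r ys xs" if "xs \<in> lists X" "ys \<in> lists X" for xs ys
    using that
  proof (induction xs arbitrary: ys)
    case (Cons x xs)
    then show ?case using total by (cases ys) (auto simp: strict_def eqv_def)
  qed simp
  show "lexle r xs zs" if "xs \<in> lists X" "ys \<in> lists X" "zs \<in> lists X"
    "lexle r xs ys" "lexle r ys zs" for xs ys zs
    using that
  proof (induction xs arbitrary: ys zs)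
    case (Cons x xs)
    obtain y ys' z zs' where yz: "ys = y # ys'" "zs = z # zs'"
      using Cons.prems by (cases ys; cases zs) auto
    have X: "x \<in> X" "y \<in> X" "z \<in> X" using Cons.hyps Cons.prems yz by auto
    have "lexle r xs ys' \<Longrightarrow> lexle r ys' zs' \<Longrightarrow> lexle r xs zs'"
      using Cons.IH[of ys' zs'] Cons.prems yz by auto
    moreover have "r x y \<Longrightarrow> r y z \<Longrightarrow> r x z" "r y z \<Longrightarrow> r z x \<Longrightarrow> r y x"
      "r z x \<Longrightarrow> r x y \<Longrightarrow> r z y" "r z y \<Longrightarrow> r y x \<Longrightarrow> r z x"
      using trans X by blast+
    ultimately show ?case
      using Cons.prems unfolding yz by (auto simp: strict_def eqv_def)
  qed simp
qed

lemma set_subseq: "subseq ys xs \<Longrightarrow> set ys \<subseteq> set xs"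
  by (induction rule: list_emb.induct) auto

lemma subseq_Cons_cases:
  assumes "subseq ys (x # xs)"
  obtains ys' where "ys = x # ys'" "subseq ys' xs" | "subseq ys xs"
proof (cases ys)
  case Nil
  then show thesis using that(2) by simp
next
  case (Cons y ys')
  show thesis
  proof (cases "y = x")
    case True
    then have "subseq ys' xs" using assms unfolding Cons by simp
    then show thesis using that(1) Cons True by blast
  next
    case False
    then have "subseq ys xs" using assms unfolding Cons by simp
    then show thesis using that(2) by blast
  qed
qed

lemma subseq_snoc_cases:
  assumes "subseq ys (xs @ [x])"
  obtains "subseq ys xs" | ys' where "ys = ys' @ [x]" "subseq ys' xs"
proof -
  obtain ys1 ys2 where ys: "ys = ys1 @ ys2" "subseq ys1 xs" "subseq ys2 [x]"
    using assms by (auto elim: subseq_appendE)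
  have "ys2 = [] \<or> ys2 = [x]"
    using ys(3) by (cases ys2) (auto split: if_splits)
  with ys that show thesis by auto
qed

lemma lexmax_exists:
  assumes "total_preorder_on X r" "set xs \<subseteq> X"
  obtains C where "lexmax r xs C"
proof -
  have "set (subseqs xs) \<subseteq> lists X"
  proof
    fix D assume "D \<in> set (subseqs xs)"
    then show "D \<in> lists X" using set_subseq assms(2) by fastforce
  qed
  then have tp: "total_preorder_on (set (subseqs xs)) (lexle r)"
    by (rule total_preorder_on_subset[OF total_preorder_on_lexle[OF assms(1)]])
  have ne: "set (subseqs xs) \<noteq> {}"
    using subseqs_refl[of xs] by (metis empty_iff)
  obtain C where "C \<in> set (subseqs xs)" "\<And>D. D \<in> set (subseqs xs) \<Longrightarrow> lexle r D C"
    using total_preorder_on_greatest[OF tp List.finite_set ne] by blast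
  then have "lexmax r xs C" unfolding lexmax_def strict_def by blast
  then show thesis by (rule that)
qed

lemma lexmax_subseq: "lexmax r xs C \<Longrightarrow> subseq C xs"
  unfolding lexmax_def by simp

lemma lexmax_greatest:
  assumes "total_preorder_on X r" "set xs \<subseteq> X" "lexmax r xs C" "subseq D xs"
  shows "lexle r D C"
proof -
  have "C \<in> lists X" "D \<in> lists X"
    using set_subseq[OF lexmax_subseq[OF assms(3)]] set_subseq[OF assms(4)] assms(2) by auto
  moreover have "\<not> strict (lexle r) C D"
    using assms(3,4) unfolding lexmax_def by simp
  ultimately show ?thesis
    using total_preorder_on_total[OF total_preorder_on_lexle[OF assms(1)]]
    unfolding strict_def by blast
qed

lemma lexmax_singleton: "lexmax r [a] C \<longleftrightarrow> C = [a]"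
  unfolding lexmax_def by (auto simp: strict_def eqv_def)

lemma lexmax_nonempty:
  assumes "xs \<noteq> []" "lexmax r xs C"
  shows "C \<noteq> []"
proof
  assume "C = []"
  moreover have "[hd xs] \<in> set (subseqs xs)"
    using assms(1) by (simp add: subseq_singleton_left)
  ultimately have "\<not> strict (lexle r) [] [hd xs]"
    using assms(2) unfolding lexmax_def by blast
  then show False unfolding strict_def by simp
qed

lemma lexle_cong:
  assumes "set xs \<subseteq> A" "set ys \<subseteq> A" "\<And>a b. a \<in> A \<Longrightarrow> b \<in> A \<Longrightarrow> r a b = r' a b"
  shows "lexle r xs ys = lexle r' xs ys"
  using assms(1,2)
proof (induction xs arbitrary: ys)
  case (Cons x xs)
  show ?case
  proof (cases ys)
    case ys: (Cons y ys')
    have "r x y = r' x y" "r y x = r' y x"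
      using Cons.prems assms(3) unfolding ys by simp_all
    moreover have "lexle r xs ys' = lexle r' xs ys'"
      using Cons.prems Cons.IH unfolding ys by simp
    ultimately show ?thesis unfolding ys by (simp add: strict_def eqv_def)
  qed simp
qed simp

lemma lexmax_cong:
  assumes "\<And>a b. a \<in> set xs \<Longrightarrow> b \<in> set xs \<Longrightarrow> r a b = r' a b"
  shows "lexmax r xs = lexmax r' xs"
proof (rule ext)
  fix C
  have eq: "strict (lexle r) C D = strict (lexle r') C D" if "subseq C xs" "subseq D xs" for D
  proof -
    have "lexle r C D = lexle r' C D" "lexle r D C = lexle r' D C"
      using lexle_cong[OF set_subseq[OF that(1)] set_subseq[OF that(2)] assms]
        lexle_cong[OF set_subseq[OF that(2)] set_subseq[OF that(1)] assms] by simp_all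
    then show ?thesis unfolding strict_def by simp
  qed
  show "lexmax r xs C = lexmax r' xs C"
  proof (cases "subseq C xs")
    case True
    then show ?thesis using eq unfolding lexmax_def by simp
  qed (simp add: lexmax_def)
qed

definition nonincreasing :: "('a \<Rightarrow> 'a \<Rightarrow> bool) \<Rightarrow> 'a list \<Rightarrow> bool" where
  "nonincreasing r xs \<longleftrightarrow> (\<forall>i. Suc i < length xs \<longrightarrow> r (xs ! Suc i) (xs ! i))"

lemma nonincreasing_Nil [simp]: "nonincreasing r []"
  and nonincreasing_singleton [simp]: "nonincreasing r [x]"
  unfolding nonincreasing_def by auto

lemma nonincreasing_Cons_Cons [simp]:
  "nonincreasing r (x # y # xs) \<longleftrightarrow> r y x \<and> nonincreasing r (y # xs)"
proof -
  have split: "(\<forall>i. P i) \<longleftrightarrow> P 0 \<and> (\<forall>i. P (Suc i))" for P :: "nat \<Rightarrow> bool"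
    by (metis not0_implies_Suc)
  show ?thesis unfolding nonincreasing_def by (subst split) simp
qed

lemma nonincreasing_snoc:
  "nonincreasing r (xs @ [b]) \<longleftrightarrow> nonincreasing r xs \<and> (xs \<noteq> [] \<longrightarrow> r b (last xs))"
  by (induction xs rule: induct_list012) simp_all

lemma nonincreasing_append_left: "nonincreasing r (xs @ ys) \<Longrightarrow> nonincreasing r xs"
  unfolding nonincreasing_def by (metis Suc_lessD length_append nth_append trans_less_add1)

lemma nonincreasing_lexle_Cons: "nonincreasing r (x # xs) \<Longrightarrow> lexle r xs (x # xs)"
proof (induction xs arbitrary: x)
  case (Cons y ys)
  then show ?case by (intro lexle_Cons_mono) simp_all
qed simp

lemma nonincreasing_lexle_subseq:
  assumes "total_preorder_on X r" "set xs \<subseteq> X" "nonincreasing r xs" "subseq D xs"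
  shows "lexle r D xs"
  using assms(2-)
proof (induction xs arbitrary: D)
  case Nil
  then show ?case by (cases D) simp_all
next
  case (Cons x xs)
  have xs: "set xs \<subseteq> X" "nonincreasing r xs"
    using Cons.prems(1,2) by (auto simp: nonincreasing_def)
  from Cons.prems(3) show ?case
  proof (cases rule: subseq_Cons_cases)
    case (1 D')
    have "r x x" using total_preorder_on_refl[OF assms(1)] Cons.prems(1) by simp
    then show ?thesis
      unfolding 1(1) by (rule lexle_Cons_mono) (rule Cons.IH[OF xs 1(2)])
  next
    case 2
    have "lexle r D xs" using Cons.IH[OF xs 2] .
    moreover have "lexle r xs (x # xs)"
      using nonincreasing_lexle_Cons[OF Cons.prems(2)] .
    ultimately show ?thesis
      using total_preorder_on_trans[OF total_preorder_on_lexle[OF assms(1)]]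
        set_subseq[OF 2] Cons.prems(1) xs(1) by (meson in_listsI subsetD)
  qed
qed

lemma lexmax_nonincreasing:
  assumes "total_preorder_on X r" "set xs \<subseteq> X" "lexmax r xs C"
  shows "nonincreasing r C"
  unfolding nonincreasing_def
proof (intro allI impI, rule ccontr)
  fix i assume i: "Suc i < length C" and not_le: "\<not> r (C ! Suc i) (C ! i)"
  have "set C \<subseteq> X" using set_subseq[OF lexmax_subseq[OF assms(3)]] assms(2) by blast
  then have "C ! i \<in> X" "C ! Suc i \<in> X" using i by auto
  then have less: "strict r (C ! i) (C ! Suc i)"
    using not_le total_preorder_on_total[OF assms(1)] unfolding strict_def by blast
  obtain P R a b where C: "C = P @ a # b # R" and ab: "a = C ! i" "b = C ! Suc i"
    using i by (metis Cons_nth_drop_Suc Suc_lessD append_take_drop_id)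
  have "subseq (P @ b # R) C"
    unfolding C subseq_append' by (rule list_emb_Cons) (rule subseq_order.order_refl)
  then have "P @ b # R \<in> set (subseqs xs)"
    using lexmax_subseq[OF assms(3)] by (simp add: subseq_order.order_trans)
  moreover have "\<And>c. c \<in> set P \<Longrightarrow> r c c"
    using \<open>set C \<subseteq> X\<close> total_preorder_on_refl[OF assms(1)] unfolding C by auto
  then have "strict (lexle r) C (P @ b # R)"
    using less unfolding ab[symmetric] by (subst (1) C) (simp add: lexle_append_left strict_def eqv_def)
  ultimately show False using assms(3) unfolding lexmax_def by blast
qed

lemma Min_set_least:
  assumes "xs \<noteq> []"
  shows "Min (set xs) \<in> set xs" "\<forall>x\<in>set xs. Min (set xs) \<le> x"
  using assms by auto

lemma pieces_not_Nil [simp]: "pieces n xs \<noteq> []"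
  by (induction xs) (auto split: list.split)

lemma pieces_Cons_sep [simp]: "pieces n (n # xs) = [] # pieces n xs"
  by simp

lemma pieces_Cons_other [simp]:
  "x \<noteq> n \<Longrightarrow> pieces n (x # xs) = (x # hd (pieces n xs)) # tl (pieces n xs)"
  by (cases "pieces n xs") simp_all

declare pieces.simps(2) [simp del]

lemma pieces_not_member: "n \<notin> set xs \<Longrightarrow> pieces n xs = [xs]"
  by (induction xs) (auto simp: pieces.simps)

lemma pieces_append_sep: "n \<notin> set p \<Longrightarrow> pieces n (p @ n # xs) = p # pieces n xs"
  by (induction p) simp_all

lemma pieces_snoc_sep: "pieces n (xs @ [n]) = pieces n xs @ [[]]"
proof (induction xs)
  case (Cons x xs)
  then show ?case by (cases "x = n"; cases "pieces n xs") simp_all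
qed simp

lemma pieces_snoc:
  "x \<noteq> n \<Longrightarrow> pieces n (xs @ [x]) = butlast (pieces n xs) @ [last (pieces n xs) @ [x]]"
proof (induction xs)
  case (Cons y xs)
  obtain q qs where "pieces n xs = q # qs" by (cases "pieces n xs") auto
  with Cons show ?case by (cases "y = n"; cases qs) simp_all
qed simp

lemma pieces_not_member_pieces: "p \<in> set (pieces n xs) \<Longrightarrow> n \<notin> set p"
proof (induction xs arbitrary: p)
  case (Cons x xs)
  obtain q qs where "pieces n xs = q # qs" by (cases "pieces n xs") auto
  with Cons show ?case by (cases "x = n") auto
qed simp

fun join :: "nat \<Rightarrow> word list \<Rightarrow> word" where
  "join n [] = []"
| "join n [p] = p"
| "join n (p # q # ps) = p @ n # join n (q # ps)"

lemma join_Cons_Cons: "join n ((x # p) # ps) = x # join n (p # ps)"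
  by (cases ps) simp_all

lemma join_pieces: "join n (pieces n xs) = xs"
proof (induction xs)
  case (Cons x xs)
  obtain q qs where q: "pieces n xs = q # qs" by (cases "pieces n xs") auto
  show ?case
  proof (cases "x = n")
    case False
    then have "pieces n (x # xs) = (x # q) # qs" using q by simp
    then show ?thesis using Cons.IH q by (simp add: join_Cons_Cons)
  qed (use Cons.IH q in simp)
qed simp

lemma pieces_join: "ps \<noteq> [] \<Longrightarrow> \<forall>p\<in>set ps. n \<notin> set p \<Longrightarrow> pieces n (join n ps) = ps"
  by (induction n ps rule: join.induct) (simp_all add: pieces_not_member pieces_append_sep)

lemma pieces_inject: "pieces n xs = pieces n ys \<Longrightarrow> xs = ys"
  by (metis join_pieces)

lemma set_join_subset: "set (join n ps) \<subseteq> insert n (\<Union>p\<in>set ps. set p)"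
  by (induction n ps rule: join.induct) auto

lemma set_subset_join: "p \<in> set ps \<Longrightarrow> set p \<subseteq> set (join n ps)"
  by (induction n ps rule: join.induct) auto

lemma member_join: "2 \<le> length ps \<Longrightarrow> n \<in> set (join n ps)"
  by (induction n ps rule: join.induct) auto

lemma length_join: "ps \<noteq> [] \<Longrightarrow> length (join n ps) = (\<Sum>p\<leftarrow>ps. length p) + (length ps - 1)"
  by (induction n ps rule: join.induct) auto

lemma set_pieces_subset: "p \<in> set (pieces n xs) \<Longrightarrow> set p \<subseteq> set xs"
  using set_subset_join[of p "pieces n xs" n] by (simp add: join_pieces)

lemma two_le_length_pieces_iff: "2 \<le> length (pieces n xs) \<longleftrightarrow> n \<in> set xs"
proof
  show "2 \<le> length (pieces n xs) \<Longrightarrow> n \<in> set xs"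
    using member_join[of "pieces n xs" n] by (simp add: join_pieces)
  show "n \<in> set xs \<Longrightarrow> 2 \<le> length (pieces n xs)"
  proof (induction xs)
    case (Cons x xs)
    then show ?case by (cases "x = n") (simp_all add: Suc_le_eq)
  qed simp
qed

lemma length_pieces_less:
  assumes "p \<in> set (pieces n xs)" "n \<in> set xs"
  shows "length p < length xs"
proof -
  let ?ps = "pieces n xs"
  have "length p \<le> (\<Sum>q\<leftarrow>?ps. length q)"
    using assms(1) member_le_sum_list[of "length p" "map length ?ps"] by simp
  moreover have "2 \<le> length ?ps"
    using two_le_length_pieces_iff assms(2) by blast
  moreover have "length xs = (\<Sum>q\<leftarrow>?ps. length q) + (length ?ps - 1)"
    using length_join[of ?ps n] by (simp add: join_pieces)
  ultimately show ?thesis by linarith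
qed

lemma ex_mem_pieces:
  assumes "x \<in> set xs" "x \<noteq> n"
  shows "\<exists>p\<in>set (pieces n xs). x \<in> set p"
proof -
  have "x \<in> insert n (\<Union>p\<in>set (pieces n xs). set p)"
    using assms(1) set_join_subset[of n "pieces n xs"] unfolding join_pieces by blast
  then show ?thesis using assms(2) by blast
qed

lemma width_less:
  assumes "ys \<noteq> []" "set ys \<subseteq> set xs" "Min (set xs) \<notin> set ys"
  shows "width ys < width xs"
proof -
  have "xs \<noteq> []" using assms(1,2) by auto
  have "Min (set xs) \<le> Min (set ys)" "Max (set ys) \<le> Max (set xs)"
    using assms(1,2) by (auto intro!: Min_antimono Max_mono)
  moreover have "Min (set ys) \<noteq> Min (set xs)"
    using assms(1,3) Min_in[of "set ys"] by (metis List.finite_set set_empty)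
  moreover have "Min (set ys) \<le> Max (set ys)"
    using assms(1) Min_in[of "set ys"] by simp
  moreover have "width ys = Max (set ys) - Min (set ys)" "width xs = Max (set xs) - Min (set xs)"
    using assms(1) \<open>xs \<noteq> []\<close> unfolding width_def by simp_all
  ultimately show ?thesis by linarith
qed

section \<open>The preorder on words\<close>

text \<open>The sequence \<open>C\<close> of the recursion defining \<open>\<precsim>\<close>, chosen for \<open>\<precsim>\<close> itself rather than for
  its approximation \<open>wleF d\<close>.\<close>

definition lexmax_pieces :: "nat \<Rightarrow> word \<Rightarrow> word list" where
  "lexmax_pieces m A = (SOME C. lexmax wle (pieces m A) C)"

definition words_in :: "nat \<Rightarrow> nat \<Rightarrow> word set" where
  "words_in a b = {A. \<forall>x\<in>set A. a \<le> x \<and> x \<le> b}"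

definition wle_sound :: "nat \<Rightarrow> nat \<Rightarrow> bool" where
  "wle_sound a b \<longleftrightarrow> total_preorder_on (words_in a b) wle \<and>
     (\<forall>P\<in>words_in a b. \<forall>Q\<in>words_in a b. \<forall>d > width (P @ Q). wleF d P Q = wle P Q)"

lemma wleF_Nil: "wleF d [] []"
  by (cases d) simp_all

lemma lexmax_pieces_not_member: "m \<notin> set P \<Longrightarrow> lexmax_pieces m P = [P]"
  unfolding lexmax_pieces_def pieces_not_member lexmax_singleton by simp

lemma lexmax_pieces_Nil: "lexmax_pieces m [] = [[]]"
  by (simp add: lexmax_pieces_not_member)

lemma lexmax_lexmax_pieces_on:
  "total_preorder_on X wle \<Longrightarrow> set (pieces m P) \<subseteq> X \<Longrightarrow> lexmax wle (pieces m P) (lexmax_pieces m P)"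
  unfolding lexmax_pieces_def by (rule lexmax_exists, assumption+) (rule someI)

lemma set_lexmax_pieces:
  "total_preorder_on X wle \<Longrightarrow> set (pieces m P) \<subseteq> X \<Longrightarrow> set (lexmax_pieces m P) \<subseteq> set (pieces m P)"
  using set_subseq[OF lexmax_subseq[OF lexmax_lexmax_pieces_on]] by blast

lemma pieces_words_in:
  assumes "P \<in> words_in a b" "\<forall>x\<in>set P. m \<le> x"
  shows "set (pieces m P) \<subseteq> words_in (Suc m) b"
proof
  fix p assume p: "p \<in> set (pieces m P)"
  have "Suc m \<le> x \<and> x \<le> b" if "x \<in> set p" for x
  proof -
    have "x \<in> set P" "x \<noteq> m"
      using that set_pieces_subset[OF p] pieces_not_member_pieces[OF p] by auto
    then show ?thesis using assms unfolding words_in_def by fastforce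
  qed
  then show "p \<in> words_in (Suc m) b" unfolding words_in_def by blast
qed

lemma wleF_Suc_lexmax_pieces:
  assumes "A @ B \<noteq> []" "n = Min (set (A @ B))"
    and tp: "total_preorder_on (set (pieces n A) \<union> set (pieces n B)) wle"
    and agree: "\<And>P Q. P \<in> set (pieces n A) \<union> set (pieces n B) \<Longrightarrow>
                       Q \<in> set (pieces n A) \<union> set (pieces n B) \<Longrightarrow> wleF d P Q = wle P Q"
  shows "wleF (Suc d) A B = lexle wle (lexmax_pieces n A) (lexmax_pieces n B)"
proof -
  let ?X = "set (pieces n A) \<union> set (pieces n B)"
  have "lexmax (wleF d) (pieces n A) = lexmax wle (pieces n A)"
    "lexmax (wleF d) (pieces n B) = lexmax wle (pieces n B)"
    by (rule lexmax_cong, rule agree; simp)+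
  then have "wleF (Suc d) A B = lexle (wleF d) (lexmax_pieces n A) (lexmax_pieces n B)"
    using assms(1,2) unfolding lexmax_pieces_def by (simp only: wleF.simps Let_def if_False)
  also have "\<dots> = lexle wle (lexmax_pieces n A) (lexmax_pieces n B)"
    using set_lexmax_pieces[OF tp] agree by (intro lexle_cong[where A = ?X]) blast+
  finally show ?thesis .
qed

lemma wleF_Suc_words_in:
  assumes sound: "\<And>n. a \<le> n \<Longrightarrow> n \<le> b \<Longrightarrow> wle_sound (Suc n) b"
    and PQ: "P \<in> words_in a b" "Q \<in> words_in a b" "P @ Q \<noteq> []" "width (P @ Q) \<le> d"
  shows "wleF (Suc d) P Q = lexle wle (lexmax_pieces (Min (set (P @ Q))) P)
                                    (lexmax_pieces (Min (set (P @ Q))) Q)"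
proof -
  define n where "n = Min (set (P @ Q))"
  let ?X = "set (pieces n P) \<union> set (pieces n Q)"
  have nmin: "n \<in> set (P @ Q)" "\<forall>x\<in>set (P @ Q). n \<le> x"
    using Min_set_least[OF PQ(3)] unfolding n_def by auto
  then have "a \<le> n" "n \<le> b" using PQ(1,2) unfolding words_in_def by auto
  then have sound_n: "wle_sound (Suc n) b" by (rule sound)
  have X: "?X \<subseteq> words_in (Suc n) b"
    using pieces_words_in[OF PQ(1)] pieces_words_in[OF PQ(2)] nmin(2) by auto
  show ?thesis unfolding n_def[symmetric]
  proof (rule wleF_Suc_lexmax_pieces[OF PQ(3) n_def])
    show "total_preorder_on ?X wle"
      using sound_n X total_preorder_on_subset unfolding wle_sound_def by blast
    fix P' Q' assume P'Q': "P' \<in> ?X" "Q' \<in> ?X"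
    show "wleF d P' Q' = wle P' Q'"
    proof (cases "P' @ Q' = []")
      case True
      then show ?thesis by (simp add: wleF_Nil wle_def)
    next
      case False
      have "set P' \<union> set Q' \<subseteq> set (P @ Q)" "n \<notin> set P' \<union> set Q'"
        using P'Q' set_pieces_subset pieces_not_member_pieces by fastforce+
      then have "width (P' @ Q') < width (P @ Q)"
        unfolding n_def by (intro width_less[OF False]) simp_all
      then have "width (P' @ Q') < d" using PQ(4) by simp
      moreover have "P' \<in> words_in (Suc n) b" "Q' \<in> words_in (Suc n) b"
        using X P'Q' by auto
      ultimately show ?thesis
        using sound_n unfolding wle_sound_def by blast
    qed
  qed
qed

lemma wle_lexmax_pieces_words_in:
  assumes sound: "\<And>n. a \<le> n \<Longrightarrow> n \<le> b \<Longrightarrow> wle_sound (Suc n) b"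
    and PQ: "P \<in> words_in a b" "Q \<in> words_in a b" and m: "\<forall>x\<in>set (P @ Q). m \<le> x"
  shows "wle P Q \<longleftrightarrow> lexle wle (lexmax_pieces m P) (lexmax_pieces m Q)"
proof (cases "m \<in> set (P @ Q)")
  case True
  then have "m = Min (set (P @ Q))" using m by (intro Min_eqI[symmetric]) auto
  moreover have "P @ Q \<noteq> []" using True by auto
  ultimately show ?thesis
    using wleF_Suc_words_in[OF sound PQ, of "width (P @ Q)"] unfolding wle_def by simp
next
  case False
  then show ?thesis by (simp add: lexmax_pieces_not_member strict_def eqv_def) blast
qed

lemma lexmax_pieces_words_in:
  assumes sound: "\<And>n. a \<le> n \<Longrightarrow> n \<le> b \<Longrightarrow> wle_sound (Suc n) b"
    and "P \<in> words_in a b" "\<forall>x\<in>set P. n \<le> x" "a \<le> n" "n \<le> b"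
  shows "lexmax_pieces n P \<in> lists (words_in (Suc n) b)"
proof -
  have "set (pieces n P) \<subseteq> words_in (Suc n) b"
    using pieces_words_in assms(2,3) by blast
  moreover have "total_preorder_on (words_in (Suc n) b) wle"
    using sound[OF assms(4,5)] unfolding wle_sound_def by blast
  ultimately show ?thesis using set_lexmax_pieces by blast
qed

lemma lexmax_pieces_at_common_min:
  assumes sound: "\<And>n. a \<le> n \<Longrightarrow> n \<le> b \<Longrightarrow> wle_sound (Suc n) b"
    and Ps: "set Ps \<subseteq> words_in a b" "concat Ps \<noteq> []"
  obtains n where "a \<le> n" "n \<le> b"
    "\<And>P. P \<in> set Ps \<Longrightarrow> lexmax_pieces n P \<in> lists (words_in (Suc n) b)"
    "\<And>P Q. P \<in> set Ps \<Longrightarrow> Q \<in> set Ps \<Longrightarrow>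
       wle P Q \<longleftrightarrow> lexle wle (lexmax_pieces n P) (lexmax_pieces n Q)"
proof
  let ?n = "Min (set (concat Ps))"
  have n: "?n \<in> set (concat Ps)" "\<forall>x\<in>set (concat Ps). ?n \<le> x"
    using Min_set_least[OF Ps(2)] by auto
  then show "a \<le> ?n" "?n \<le> b" using Ps(1) unfolding words_in_def by auto
  have below: "\<forall>x\<in>set P. ?n \<le> x" if "P \<in> set Ps" for P
  proof -
    have "set P \<subseteq> set (concat Ps)" using that by auto
    then show ?thesis using n(2) by blast
  qed
  show "lexmax_pieces ?n P \<in> lists (words_in (Suc ?n) b)" if "P \<in> set Ps" for P
    using lexmax_pieces_words_in[of a b, OF sound] that Ps(1) below[OF that]
      \<open>a \<le> ?n\<close> \<open>?n \<le> b\<close> by blast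
  show "wle P Q \<longleftrightarrow> lexle wle (lexmax_pieces ?n P) (lexmax_pieces ?n Q)"
    if "P \<in> set Ps" "Q \<in> set Ps" for P Q
    by (rule wle_lexmax_pieces_words_in[of a b, OF sound])
      (use that Ps(1) below[OF that(1)] below[OF that(2)] in auto)
qed

lemma total_preorder_on_words_in_step:
  assumes sound: "\<And>n. a \<le> n \<Longrightarrow> n \<le> b \<Longrightarrow> wle_sound (Suc n) b"
  shows "total_preorder_on (words_in a b) wle"
proof (rule total_preorder_onI)
  have tp_lex: "total_preorder_on (lists (words_in (Suc n) b)) (lexle wle)" if "a \<le> n" "n \<le> b" for n
    using sound[OF that] total_preorder_on_lexle unfolding wle_sound_def by blast
  show "wle P Q \<or> wle Q P" if "P \<in> words_in a b" "Q \<in> words_in a b" for P Q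
  proof (cases "concat [P, Q] = []")
    case True
    then show ?thesis by (simp add: wle_def wleF_Nil)
  next
    case False
    have Ps: "set [P, Q] \<subseteq> words_in a b" using that by simp
    obtain n where "a \<le> n" "n \<le> b"
      and L: "\<And>P'. P' \<in> set [P, Q] \<Longrightarrow> lexmax_pieces n P' \<in> lists (words_in (Suc n) b)"
      and K: "\<And>P' Q'. P' \<in> set [P, Q] \<Longrightarrow> Q' \<in> set [P, Q] \<Longrightarrow>
                wle P' Q' \<longleftrightarrow> lexle wle (lexmax_pieces n P') (lexmax_pieces n Q')"
      using lexmax_pieces_at_common_min[OF sound Ps False] by blast
    have "lexle wle (lexmax_pieces n P) (lexmax_pieces n Q) \<or>
          lexle wle (lexmax_pieces n Q) (lexmax_pieces n P)"
      by (rule total_preorder_on_total[OF tp_lex[OF \<open>a \<le> n\<close> \<open>n \<le> b\<close>] L L]) simp_all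
    then show ?thesis using K[of P Q] K[of Q P] by simp
  qed
  show "wle P R" if "P \<in> words_in a b" "Q \<in> words_in a b" "R \<in> words_in a b"
    "wle P Q" "wle Q R" for P Q R
  proof (cases "concat [P, Q, R] = []")
    case True
    then show ?thesis by (simp add: wle_def wleF_Nil)
  next
    case False
    have Ps: "set [P, Q, R] \<subseteq> words_in a b" using that(1-3) by simp
    obtain n where "a \<le> n" "n \<le> b"
      and L: "\<And>P'. P' \<in> set [P, Q, R] \<Longrightarrow> lexmax_pieces n P' \<in> lists (words_in (Suc n) b)"
      and K: "\<And>P' Q'. P' \<in> set [P, Q, R] \<Longrightarrow> Q' \<in> set [P, Q, R] \<Longrightarrow>
                wle P' Q' \<longleftrightarrow> lexle wle (lexmax_pieces n P') (lexmax_pieces n Q')"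
      using lexmax_pieces_at_common_min[OF sound Ps False] by blast
    have "lexle wle (lexmax_pieces n P) (lexmax_pieces n Q)"
      "lexle wle (lexmax_pieces n Q) (lexmax_pieces n R)"
      using K[of P Q] K[of Q R] that(4,5) by simp_all
    then have "lexle wle (lexmax_pieces n P) (lexmax_pieces n R)"
      by (rule total_preorder_on_trans[OF tp_lex[OF \<open>a \<le> n\<close> \<open>n \<le> b\<close>] L L L, rotated 3])
        simp_all
    then show ?thesis using K[of P R] by simp
  qed
qed

lemma wle_sound_step:
  assumes sound: "\<And>n. a \<le> n \<Longrightarrow> n \<le> b \<Longrightarrow> wle_sound (Suc n) b"
  shows "wle_sound a b"
  unfolding wle_sound_def
proof (intro conjI ballI allI impI)
  show "total_preorder_on (words_in a b) wle"
    using total_preorder_on_words_in_step[OF sound] .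
  fix P Q d assume PQ: "P \<in> words_in a b" "Q \<in> words_in a b" "width (P @ Q) < d"
  show "wleF d P Q = wle P Q"
  proof (cases "P @ Q = []")
    case True
    then show ?thesis by (simp add: wleF_Nil wle_def)
  next
    case False
    obtain d' where "d = Suc d'" "width (P @ Q) \<le> d'" using PQ(3) by (cases d) auto
    then show ?thesis
      using wleF_Suc_words_in[OF sound PQ(1,2) False] unfolding wle_def by simp
  qed
qed

text \<open>Induction on the alphabet: the pieces of words over \<open>{a..b}\<close> at their least symbol
  \<open>n \<ge> a\<close> are words over \<open>{Suc n..b}\<close>.\<close>

lemma wle_sound: "wle_sound a b"
proof (induction "Suc b - a" arbitrary: a rule: less_induct)
  case less
  then show ?case by (rule wle_sound_step) simp
qed

lemma words_in_sum_list: "set P \<subseteq> set Z \<Longrightarrow> P \<in> words_in 0 (sum_list Z)"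
  unfolding words_in_def using member_le_sum_list by fastforce

lemma total_preorder_wle: "total_preorder_on UNIV wle"
proof (rule total_preorder_onI)
  have tp: "total_preorder_on (words_in 0 (sum_list Z)) wle" for Z
    using wle_sound unfolding wle_sound_def by blast
  show "wle P Q \<or> wle Q P" for P Q
    by (rule total_preorder_on_total[OF tp[of "P @ Q"]]; rule words_in_sum_list) auto
  show "wle P R" if "wle P Q" "wle Q R" for P Q R
    by (rule total_preorder_on_trans[OF tp[of "P @ Q @ R"] _ _ _ that]; rule words_in_sum_list) auto
qed

lemma wle_refl [simp]: "wle A A"
  using total_preorder_on_refl[OF total_preorder_wle] by blast

lemma wle_total: "wle A B \<or> wle B A"
  using total_preorder_on_total[OF total_preorder_wle] by blast

lemma wle_trans: "wle A B \<Longrightarrow> wle B C \<Longrightarrow> wle A C"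
  using total_preorder_on_trans[OF total_preorder_wle] by blast

lemma wless_wle_trans: "wless A B \<Longrightarrow> wle B C \<Longrightarrow> wless A C"
  unfolding wless_def using wle_trans by blast

lemma wle_wless_trans: "wle A B \<Longrightarrow> wless B C \<Longrightarrow> wless A C"
  unfolding wless_def using wle_trans by blast

lemma wequiv_sym: "wequiv A B \<Longrightarrow> wequiv B A"
  unfolding wequiv_def by blast

lemma wequiv_trans: "wequiv A B \<Longrightarrow> wequiv B C \<Longrightarrow> wequiv A C"
  unfolding wequiv_def using wle_trans by blast

lemma wle_iff_lexle_lexmax_pieces:
  assumes "\<forall>x\<in>set (P @ Q). m \<le> x"
  shows "wle P Q \<longleftrightarrow> lexle wle (lexmax_pieces m P) (lexmax_pieces m Q)"
proof (rule wle_lexmax_pieces_words_in[OF _ _ _ assms])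
  show "P \<in> words_in 0 (sum_list (P @ Q))" "Q \<in> words_in 0 (sum_list (P @ Q))"
    by (rule words_in_sum_list; simp)+
qed (rule wle_sound)

lemma lexmax_lexmax_pieces: "lexmax wle (pieces m P) (lexmax_pieces m P)"
  using lexmax_lexmax_pieces_on[OF total_preorder_wle] by blast

lemma subseq_lexmax_pieces: "subseq (lexmax_pieces m P) (pieces m P)"
  using lexmax_subseq[OF lexmax_lexmax_pieces] .

lemma lexle_lexmax_pieces: "subseq E (pieces m P) \<Longrightarrow> lexle wle E (lexmax_pieces m P)"
  using lexmax_greatest[OF total_preorder_wle _ lexmax_lexmax_pieces] by blast

lemma lexmax_pieces_not_Nil: "lexmax_pieces m P \<noteq> []"
  using lexmax_nonempty[OF pieces_not_Nil lexmax_lexmax_pieces] .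

lemma lexle_wle_trans: "lexle wle xs ys \<Longrightarrow> lexle wle ys zs \<Longrightarrow> lexle wle xs zs"
  by (rule total_preorder_on_trans[OF total_preorder_on_lexle[OF total_preorder_wle]]) auto

lemma lexle_wle_refl [simp]: "lexle wle xs xs"
  by (induction xs) (simp_all add: eqv_def)

lemma lexle_wle_snoc: "lexle wle (E @ [a]) (E @ [b]) \<longleftrightarrow> wle a b"
  by (simp add: lexle_append_left strict_def eqv_def) blast

lemma lexle_wle_snoc_less: "wless a b \<Longrightarrow> lexle wle (E @ [a, c]) (E @ [b])"
  by (simp add: lexle_append_left strict_def wless_def)

lemma pieces_butlast_last: "pieces n xs = butlast (pieces n xs) @ [last (pieces n xs)]"
  by simp

lemma wle_if_subseqs_dominated:
  assumes "\<forall>x\<in>set (A @ B). m \<le> x"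
    and "\<And>E. subseq E (pieces m A) \<Longrightarrow> \<exists>F. subseq F (pieces m B) \<and> lexle wle E F"
  shows "wle A B"
proof -
  obtain F where "subseq F (pieces m B)" "lexle wle (lexmax_pieces m A) F"
    using assms(2)[OF subseq_lexmax_pieces] by blast
  then have "lexle wle (lexmax_pieces m A) (lexmax_pieces m B)"
    using lexle_wle_trans lexle_lexmax_pieces by blast
  then show ?thesis using wle_iff_lexle_lexmax_pieces[OF assms(1)] by simp
qed

lemma wless_if_subseq_above:
  assumes "\<forall>x\<in>set (A @ B). m \<le> x" "subseq E (pieces m B)"
    and "lexle wle (lexmax_pieces m A) E" "\<not> lexle wle E (lexmax_pieces m A)"
  shows "wless A B"
proof -
  have E: "lexle wle E (lexmax_pieces m B)" using lexle_lexmax_pieces[OF assms(2)] .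
  have "\<forall>x\<in>set (B @ A). m \<le> x" using assms(1) by auto
  then show ?thesis
    unfolding wless_def using wle_iff_lexle_lexmax_pieces[OF assms(1)]
      wle_iff_lexle_lexmax_pieces[of B A m] assms(3,4) E lexle_wle_trans by blast
qed

lemma wle_Nil [simp]: "wle [] A"
proof (induction "length A" arbitrary: A rule: less_induct)
  case less
  show ?case
  proof (cases "A = []")
    case False
    define m where "m = Min (set A)"
    have m: "m \<in> set A" "\<forall>x\<in>set ([] @ A). m \<le> x"
      using Min_set_least[OF False] unfolding m_def by auto
    obtain c C where c: "lexmax_pieces m A = c # C"
      using lexmax_pieces_not_Nil by (meson neq_Nil_conv)
    have "c \<in> set (pieces m A)"
      using set_subseq[OF subseq_lexmax_pieces, of m A] c by auto
    then have "wle [] c" using less length_pieces_less m(1) by blast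
    then have "lexle wle [[]] (lexmax_pieces m A)" unfolding c by (rule lexle_Cons_mono) simp
    then show ?thesis using wle_iff_lexle_lexmax_pieces[OF m(2)] lexmax_pieces_Nil by simp
  qed simp
qed

lemma wless_Nil: "A \<noteq> [] \<Longrightarrow> wless [] A"
proof -
  assume "A \<noteq> []"
  define m where "m = Min (set A)"
  have m: "m \<in> set A" "\<forall>x\<in>set (A @ []). m \<le> x"
    using Min_set_least[OF \<open>A \<noteq> []\<close>] unfolding m_def by auto
  obtain p q ps where ps: "pieces m A = p # q # ps"
    using two_le_length_pieces_iff[of m A] m(1) by (metis One_nat_def Suc_1 Suc_le_length_iff)
  have "\<not> lexle wle (lexmax_pieces m A) [[]]"
  proof
    assume "lexle wle (lexmax_pieces m A) [[]]"
    moreover have "lexle wle (pieces m A) (lexmax_pieces m A)"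
      by (rule lexle_lexmax_pieces) simp
    ultimately have "lexle wle (p # q # ps) [[]]" using lexle_wle_trans ps by metis
    then show False by (simp add: strict_def eqv_def)
  qed
  then show ?thesis
    unfolding wless_def using wle_iff_lexle_lexmax_pieces[OF m(2)] lexmax_pieces_Nil by simp
qed

lemma wle_last_piece:
  assumes "\<forall>x\<in>set (A @ B). m \<le> x" "pieces m A = ps @ [u]" "pieces m B = ps @ [v]" "wle u v"
  shows "wle A B"
proof (rule wle_if_subseqs_dominated[OF assms(1)])
  fix E assume "subseq E (pieces m A)"
  then consider "subseq E ps" | E' where "E = E' @ [u]" "subseq E' ps"
    unfolding assms(2) by (rule subseq_snoc_cases)
  then show "\<exists>F. subseq F (pieces m B) \<and> lexle wle E F"
  proof cases
    case 1
    then show ?thesis unfolding assms(3) by (intro exI[of _ E]) (simp add: subseq_rev_drop_many)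
  next
    case 2
    then show ?thesis
      unfolding assms(3) using assms(4) by (intro exI[of _ "E' @ [v]"]) (simp add: lexle_wle_snoc)
  qed
qed

lemma wless_last_piece:
  assumes "\<forall>x\<in>set (A @ B). m \<le> x" "pieces m A = ps @ [u]" "pieces m B = ps @ [v]" "wless u v"
  shows "wless A B"
proof -
  let ?C = "lexmax_pieces m A"
  have "subseq ?C (ps @ [u])" using subseq_lexmax_pieces assms(2) by metis
  then consider "subseq ?C ps" | E' where "?C = E' @ [u]" "subseq E' ps"
    by (rule subseq_snoc_cases)
  then show ?thesis
  proof cases
    case 1
    show ?thesis
    proof (rule wless_if_subseq_above[OF assms(1), of "?C @ [v]"])
      show "subseq (?C @ [v]) (pieces m B)" unfolding assms(3) using 1 by simp
    qed (simp_all add: lexle_append_self not_lexle_append_self)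
  next
    case 2
    show ?thesis
    proof (rule wless_if_subseq_above[OF assms(1), of "E' @ [v]"])
      show "subseq (E' @ [v]) (pieces m B)" unfolding assms(3) using 2(2) by simp
    qed (use 2(1) assms(4) in \<open>simp_all add: lexle_wle_snoc wless_def\<close>)
  qed
qed

lemma wless_pieces_snoc:
  assumes "\<forall>x\<in>set (A @ B). m \<le> x" "pieces m B = pieces m A @ [p]"
  shows "wless A B"
proof (rule wless_if_subseq_above[OF assms(1), of "lexmax_pieces m A @ [p]"])
  show "subseq (lexmax_pieces m A @ [p]) (pieces m B)"
    unfolding assms(2) using subseq_lexmax_pieces by simp
qed (simp_all add: lexle_append_self not_lexle_append_self)

lemma wless_snoc: "wless A (A @ [n])"
proof (induction "length A" arbitrary: A rule: less_induct)
  case less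
  define m where "m = Min (set (A @ [n]))"
  have m: "m \<in> set (A @ [n])" "\<forall>x\<in>set (A @ A @ [n]). m \<le> x"
    using Min_set_least[of "A @ [n]"] unfolding m_def by auto
  show ?case
  proof (cases "n = m")
    case True
    then show ?thesis by (intro wless_pieces_snoc[OF m(2)]) (simp add: pieces_snoc_sep)
  next
    case False
    let ?u = "last (pieces m A)"
    have "m \<in> set A" using m(1) False by simp
    then have "length ?u < length A"
      using length_pieces_less[OF last_in_set[OF pieces_not_Nil]] by blast
    then have "wless ?u (?u @ [n])" by (rule less)
    then show ?thesis
      using wless_last_piece[OF m(2) pieces_butlast_last] pieces_snoc[OF False] by simp
  qed
qed

lemma wle_snoc: "wle A (A @ [n])"
  using wless_snoc unfolding wless_def by blast

lemma subseq_snoc_Nil_dominated: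
  assumes "wless u v" "subseq E ((ps @ [u]) @ [[]])"
  shows "\<exists>F. subseq F (ps @ [v]) \<and> lexle wle E F"
proof -
  have "wle u v" using assms(1) unfolding wless_def by blast
  from assms(2) consider "subseq E (ps @ [u])" | E' where "E = E' @ [[]]" "subseq E' (ps @ [u])"
    by (rule subseq_snoc_cases)
  then show ?thesis
  proof cases
    case 1
    then consider "subseq E ps" | E' where "E = E' @ [u]" "subseq E' ps"
      by (rule subseq_snoc_cases)
    then show ?thesis
    proof cases
      case 1
      then show ?thesis by (intro exI[of _ E]) (simp add: subseq_rev_drop_many)
    next
      case 2
      then show ?thesis
        using \<open>wle u v\<close> by (intro exI[of _ "E' @ [v]"]) (simp add: lexle_wle_snoc)
    qed
  next
    case outer: 2
    from outer(2) consider "subseq E' ps" | E'' where "E' = E'' @ [u]" "subseq E'' ps"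
      by (rule subseq_snoc_cases)
    then show ?thesis
    proof cases
      case 1
      then show ?thesis
        using outer(1) by (intro exI[of _ "E' @ [v]"]) (simp add: lexle_wle_snoc)
    next
      case 2
      then show ?thesis
        using outer(1) lexle_wle_snoc_less[OF assms(1)] by (intro exI[of _ "E'' @ [v]"]) simp
    qed
  qed
qed

lemma wle_snoc_least:
  assumes "\<forall>x\<in>set A. k \<le> x" "k < j"
  shows "wle (A @ [k]) (A @ [j])"
proof (rule wle_if_subseqs_dominated)
  show "\<forall>x\<in>set ((A @ [k]) @ A @ [j]). k \<le> x" using assms by auto
  let ?ps = "butlast (pieces k A)" and ?u = "last (pieces k A)"
  fix E assume "subseq E (pieces k (A @ [k]))"
  then have "subseq E ((?ps @ [?u]) @ [[]])"
    using pieces_snoc_sep[of k A] by simp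
  then have "\<exists>F. subseq F (?ps @ [?u @ [j]]) \<and> lexle wle E F"
    by (rule subseq_snoc_Nil_dominated[OF wless_snoc])
  then show "\<exists>F. subseq F (pieces k (A @ [j])) \<and> lexle wle E F"
    using pieces_snoc assms(2) by simp
qed

lemma wle_snoc_mono: "k \<le> j \<Longrightarrow> wle (A @ [k]) (A @ [j])"
proof (induction "length A" arbitrary: A rule: less_induct)
  case less
  consider "k = j" | "k < j" "\<forall>x\<in>set A. k \<le> x" | x where "k < j" "x \<in> set A" "x < k"
    using less.prems by (meson le_neq_implies_less not_le)
  then show ?case
  proof cases
    case 2
    then show ?thesis by (rule wle_snoc_least[rotated])
  next
    case (3 x)
    define m where "m = Min (set A)"
    have "A \<noteq> []" using 3(2) by auto
    then have "m \<in> set A" "\<forall>x\<in>set A. m \<le> x"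
      using Min_set_least unfolding m_def by blast+
    then have m: "m \<in> set A" "m < k" "\<forall>x\<in>set ((A @ [k]) @ A @ [j]). m \<le> x"
      using 3 by fastforce+
    let ?u = "last (pieces m A)"
    have "length ?u < length A"
      using length_pieces_less[OF last_in_set[OF pieces_not_Nil] m(1)] .
    then have "wle (?u @ [k]) (?u @ [j])" using less by blast
    then show ?thesis
      using wle_last_piece[OF m(3)] pieces_snoc m(2) 3(1) by simp
  qed simp
qed

lemma wless_singleton: "\<forall>s\<in>set A. s < c \<Longrightarrow> wless A [c]"
proof (induction "length A" arbitrary: A rule: less_induct)
  case less
  show ?case
  proof (cases "A = []")
    case False
    define m where "m = Min (set A)"
    have m: "m \<in> set A" "m < c" "\<forall>x\<in>set (A @ [c]). m \<le> x" "\<forall>x\<in>set ([c] @ A). m \<le> x"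
      using Min_set_least[OF False] less.prems unfolding m_def by auto
    obtain d D where d: "lexmax_pieces m A = d # D"
      using lexmax_pieces_not_Nil by (meson neq_Nil_conv)
    have "d \<in> set (pieces m A)"
      using set_subseq[OF subseq_lexmax_pieces, of m A] d by auto
    then have "length d < length A" "set d \<subseteq> set A"
      using length_pieces_less m(1) set_pieces_subset by blast+
    then have "wless d [c]" using less by blast
    moreover have "lexmax_pieces m [c] = [[c]]"
      using lexmax_pieces_not_member m(2) by simp
    ultimately show ?thesis
      unfolding wless_def wle_iff_lexle_lexmax_pieces[OF m(3)] wle_iff_lexle_lexmax_pieces[OF m(4)] d
      by (simp add: strict_def eqv_def)
  qed (simp add: wless_Nil)
qed

lemma singleton_wle_least:
  assumes "A \<noteq> []" "\<forall>x\<in>set A. c \<le> x"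
  shows "wle [c] A"
proof -
  have c: "\<forall>x\<in>set ([c] @ A). c \<le> x" using assms(2) by auto
  have "lexle wle (lexmax_pieces c [c]) [[], []]"
    using nonincreasing_lexle_subseq[OF total_preorder_wle _ _ subseq_lexmax_pieces, of c "[c]"]
    by (simp add: pieces_snoc_sep[of c "[]", simplified])
  moreover have "lexle wle [[], []] (lexmax_pieces c A)"
  proof (cases "c \<in> set A")
    case True
    then obtain p q ps where ps: "pieces c A = p # q # ps"
      using two_le_length_pieces_iff[of c A] by (metis One_nat_def Suc_1 Suc_le_length_iff)
    have "lexle wle [[], []] (p # q # ps)" by (intro lexle_Cons_mono) simp_all
    moreover have "lexle wle (pieces c A) (lexmax_pieces c A)" by (rule lexle_lexmax_pieces) simp
    ultimately show ?thesis using lexle_wle_trans ps by metis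
  next
    case False
    then show ?thesis
      using lexmax_pieces_not_member wless_Nil[OF assms(1)] by (simp add: strict_def wless_def)
  qed
  ultimately show ?thesis using wle_iff_lexle_lexmax_pieces[OF c] lexle_wle_trans by blast
qed

lemma singleton_wle: "\<exists>s\<in>set A. c \<le> s \<Longrightarrow> wle [c] A"
proof (induction "length A" arbitrary: A rule: less_induct)
  case less
  then obtain s where s: "s \<in> set A" "c \<le> s" by blast
  then have "A \<noteq> []" by auto
  define m where "m = Min (set A)"
  have m: "m \<in> set A" "\<forall>x\<in>set A. m \<le> x"
    using Min_set_least[OF \<open>A \<noteq> []\<close>] unfolding m_def by auto
  show ?case
  proof (cases "m < c")
    case True
    then have "s \<noteq> m" using s(2) by simp
    then obtain P where P: "P \<in> set (pieces m A)" "s \<in> set P"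
      using ex_mem_pieces[OF s(1)] by blast
    then have "wle [c] P"
      using less length_pieces_less[OF P(1) m(1)] s(2) by blast
    then have "lexle wle [[c]] [P]" by (rule lexle_Cons_mono) simp
    moreover have "lexle wle [P] (lexmax_pieces m A)"
      using P(1) by (intro lexle_lexmax_pieces) (simp add: subseq_singleton_left)
    moreover have "lexmax_pieces m [c] = [[c]]"
      using lexmax_pieces_not_member True by simp
    ultimately have "lexle wle (lexmax_pieces m [c]) (lexmax_pieces m A)"
      using lexle_wle_trans by metis
    moreover have "\<forall>x\<in>set ([c] @ A). m \<le> x" using m(2) True by auto
    ultimately show ?thesis using wle_iff_lexle_lexmax_pieces by blast
  next
    case False
    then have "\<forall>x\<in>set A. c \<le> x" using m(2) by fastforce
    then show ?thesis by (rule singleton_wle_least[OF \<open>A \<noteq> []\<close>])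
  qed
qed

lemma wless_singleton_iff: "wless A [c] \<longleftrightarrow> (\<forall>s\<in>set A. s < c)"
  using wless_singleton singleton_wle unfolding wless_def by (meson not_le)

section \<open>Normal forms\<close>

lemma eqv_wle_iff_wequiv: "eqv wle A B \<longleftrightarrow> wequiv A B"
  unfolding eqv_def wequiv_def ..

lemma NF_iff_Min: "A \<in> NF \<longleftrightarrow> A = [] \<or>
    (nonincreasing wle (pieces (Min (set A)) A) \<and> (\<forall>P\<in>set (pieces (Min (set A)) A). P \<in> NF))"
  by (subst NF.simps) (auto simp: nonincreasing_def)

text \<open>Below its least symbol a word is its own single piece.\<close>

lemma NF_iff_pieces:
  assumes "\<forall>x\<in>set A. m \<le> x"
  shows "A \<in> NF \<longleftrightarrow> nonincreasing wle (pieces m A) \<and> (\<forall>P\<in>set (pieces m A). P \<in> NF)"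
proof (cases "m \<in> set A")
  case True
  then have "Min (set A) = m" using assms by (intro Min_eqI) auto
  then show ?thesis using True NF_iff_Min[of A] by auto
qed (simp add: pieces_not_member)

lemma lexmax_pieces_nonincreasing:
  assumes "nonincreasing wle (pieces m P)"
  shows "lexle wle (lexmax_pieces m P) (pieces m P)" "lexle wle (pieces m P) (lexmax_pieces m P)"
  using nonincreasing_lexle_subseq[OF total_preorder_wle _ assms subseq_lexmax_pieces]
    lexle_lexmax_pieces[of "pieces m P" m P] by auto

lemma wequiv_iff_lexmax_pieces:
  assumes "\<forall>x\<in>set (A @ B). m \<le> x"
  shows "wequiv A B \<longleftrightarrow>
    lexle wle (lexmax_pieces m A) (lexmax_pieces m B) \<and> lexle wle (lexmax_pieces m B) (lexmax_pieces m A)"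
proof -
  have "\<forall>x\<in>set (B @ A). m \<le> x" using assms by auto
  then show ?thesis
    unfolding wequiv_def using wle_iff_lexle_lexmax_pieces[OF assms] wle_iff_lexle_lexmax_pieces by blast
qed

lemma wequiv_iff_pieces:
  assumes "\<forall>x\<in>set (A @ B). m \<le> x"
    and "nonincreasing wle (pieces m A)" "nonincreasing wle (pieces m B)"
  shows "wequiv A B \<longleftrightarrow> list_all2 (eqv wle) (pieces m A) (pieces m B)"
proof -
  have "wequiv A B \<longleftrightarrow> lexle wle (pieces m A) (pieces m B) \<and> lexle wle (pieces m B) (pieces m A)"
    unfolding wequiv_iff_lexmax_pieces[OF assms(1)]
    using lexmax_pieces_nonincreasing[OF assms(2)] lexmax_pieces_nonincreasing[OF assms(3)]
      lexle_wle_trans by meson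
  also have "\<dots> \<longleftrightarrow> list_all2 (eqv wle) (pieces m A) (pieces m B)"
    by (rule lexle_antisym_iff)
  finally show ?thesis .
qed

lemma NF_unique: "A \<in> NF \<Longrightarrow> B \<in> NF \<Longrightarrow> wequiv A B \<Longrightarrow> A = B"
proof (induction "length A" arbitrary: A B rule: less_induct)
  case less
  show ?case
  proof (cases "A @ B = []")
    case False
    define m where "m = Min (set (A @ B))"
    have m: "m \<in> set (A @ B)" "\<forall>x\<in>set (A @ B). m \<le> x"
      using Min_set_least[OF False] unfolding m_def by auto
    have A: "nonincreasing wle (pieces m A)" "\<forall>P\<in>set (pieces m A). P \<in> NF"
      using NF_iff_pieces[of A m] less.prems(1) m(2) by auto
    have B: "nonincreasing wle (pieces m B)" "\<forall>P\<in>set (pieces m B). P \<in> NF"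
      using NF_iff_pieces[of B m] less.prems(2) m(2) by auto
    have all2: "list_all2 (eqv wle) (pieces m A) (pieces m B)"
      using wequiv_iff_pieces[OF m(2) A(1) B(1)] less.prems(3) by simp
    then have "length (pieces m A) = length (pieces m B)" by (rule list_all2_lengthD)
    \<comment> \<open>equally many pieces, so the least symbol occurs in both words\<close>
    then have "m \<in> set A" using m(1) two_le_length_pieces_iff by (metis Un_iff set_append)
    have "pieces m A = pieces m B"
    proof (rule nth_equalityI)
      show len: "length (pieces m A) = length (pieces m B)" by (rule list_all2_lengthD[OF all2])
      fix i assume i: "i < length (pieces m A)"
      have "pieces m A ! i \<in> set (pieces m A)" "pieces m B ! i \<in> set (pieces m B)"
        using i len by auto
      moreover have "wequiv (pieces m A ! i) (pieces m B ! i)"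
        using all2 i unfolding list_all2_conv_all_nth eqv_wle_iff_wequiv by blast
      ultimately show "pieces m A ! i = pieces m B ! i"
        using less.hyps length_pieces_less A(2) B(2) \<open>m \<in> set A\<close> by blast
    qed
    then show ?thesis by (rule pieces_inject)
  qed simp
qed

lemma nonincreasing_wle_list_all2:
  assumes "list_all2 (eqv wle) ys xs" "nonincreasing wle xs"
  shows "nonincreasing wle ys"
  unfolding nonincreasing_def
proof (intro allI impI)
  fix i assume i: "Suc i < length ys"
  have "length ys = length xs" using list_all2_lengthD[OF assms(1)] .
  then have "wle (ys ! Suc i) (xs ! Suc i)" "wle (xs ! Suc i) (xs ! i)" "wle (xs ! i) (ys ! i)"
    using assms i unfolding list_all2_conv_all_nth nonincreasing_def eqv_def by auto
  then show "wle (ys ! Suc i) (ys ! i)" using wle_trans by blast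
qed

text \<open>Normalise the pieces of the lexicographically maximal subsequence and join them again.\<close>

lemma NF_exists: "\<exists>B. B \<in> NF \<and> wequiv B A \<and> set B \<subseteq> set A"
proof (induction "length A" arbitrary: A rule: less_induct)
  case less
  show ?case
  proof (cases "A = []")
    case True
    then show ?thesis by (intro exI[of _ "[]"]) (simp add: NF_Nil wequiv_def)
  next
    case False
    define m where "m = Min (set A)"
    have m: "m \<in> set A" "\<forall>x\<in>set A. m \<le> x"
      using Min_set_least[OF False] unfolding m_def by auto
    define C where "C = lexmax_pieces m A"
    have C: "set C \<subseteq> set (pieces m A)"
      using set_subseq[OF subseq_lexmax_pieces] unfolding C_def .
    have "\<forall>c\<in>set C. \<exists>c'. c' \<in> NF \<and> wequiv c' c \<and> set c' \<subseteq> set c"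
      using less length_pieces_less[OF _ m(1)] C by blast
    then obtain f where f: "\<And>c. c \<in> set C \<Longrightarrow> f c \<in> NF \<and> wequiv (f c) c \<and> set (f c) \<subseteq> set c"
      by metis
    define B where "B = join m (map f C)"
    have C'_pieces: "\<forall>p\<in>set (map f C). m \<notin> set p \<and> set p \<subseteq> set A"
      using f C pieces_not_member_pieces set_pieces_subset by fastforce
    have pieces_B: "pieces m B = map f C"
      unfolding B_def using pieces_join lexmax_pieces_not_Nil C'_pieces unfolding C_def by auto
    have all2: "list_all2 (eqv wle) (map f C) C"
      using f unfolding list_all2_conv_all_nth eqv_wle_iff_wequiv by auto
    have "nonincreasing wle C"
      using lexmax_nonincreasing[OF total_preorder_wle _ lexmax_lexmax_pieces] unfolding C_def by blast
    then have nonincr: "nonincreasing wle (pieces m B)"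
      unfolding pieces_B using nonincreasing_wle_list_all2[OF all2] by blast
    have "set B \<subseteq> set A"
      unfolding B_def using set_join_subset[of m "map f C"] C'_pieces m(1) by blast
    then have lower: "\<forall>x\<in>set (B @ A). m \<le> x" using m(2) by auto
    have "B \<in> NF"
      using NF_iff_pieces[of B m] lower nonincr f unfolding pieces_B by auto
    moreover have "lexle wle (map f C) C" "lexle wle C (map f C)"
      using all2 lexle_antisym_iff by blast+
    then have "wequiv B A"
      unfolding wequiv_iff_lexmax_pieces[OF lower] C_def[symmetric]
      using lexmax_pieces_nonincreasing[OF nonincr, unfolded pieces_B] lexle_wle_trans by blast
    ultimately show ?thesis using \<open>set B \<subseteq> set A\<close> by blast
  qed
qed

lemma wequiv_diamond: "wequiv (diamond n A) (A @ [n])"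
proof -
  obtain B where B: "B \<in> NF" "wequiv B (A @ [n])" using NF_exists by blast
  have "B' = B" if "B' \<in> NF" "wequiv B' (A @ [n])" for B'
    using NF_unique[OF that(1) B(1)] wequiv_trans[OF that(2) wequiv_sym[OF B(2)]] by blast
  then have "\<exists>!B. B \<in> NF \<and> wequiv B (A @ [n])" using B by blast
  then have "diamond n A \<in> NF \<and> wequiv (diamond n A) (A @ [n])"
    unfolding diamond_def by (rule theI')
  then show ?thesis by simp
qed

lemma NF_butlast: "A \<in> NF \<Longrightarrow> butlast A \<in> NF"
proof (induction "length A" arbitrary: A rule: less_induct)
  case less
  show ?case
  proof (cases "A = []")
    case False
    define m where "m = Min (set A)"
    have m: "m \<in> set A" "\<forall>x\<in>set A. m \<le> x"
      using Min_set_least[OF False] unfolding m_def by auto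
    obtain ys k where A: "A = ys @ [k]" using False by (metis append_butlast_last_id)
    have ys: "\<forall>x\<in>set ys. m \<le> x" using m(2) unfolding A by simp
    have A_NF: "nonincreasing wle (pieces m A)" "\<forall>P\<in>set (pieces m A). P \<in> NF"
      using NF_iff_pieces[OF m(2)] less.prems by auto
    let ?Q = "pieces m ys"
    have "nonincreasing wle ?Q \<and> (\<forall>P\<in>set ?Q. P \<in> NF)"
    proof (cases "k = m")
      case True
      then have "pieces m A = ?Q @ [[]]" unfolding A by (simp add: pieces_snoc_sep)
      then show ?thesis using A_NF nonincreasing_append_left by auto
    next
      case False
      let ?bq = "butlast ?Q" and ?q = "last ?Q"
      have Q: "?Q = ?bq @ [?q]" by simp
      have A_pieces: "pieces m A = ?bq @ [?q @ [k]]" unfolding A using pieces_snoc[OF False] by simp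
      have qk: "?q @ [k] \<in> set (pieces m A)" unfolding A_pieces by simp
      then have "length (?q @ [k]) < length A" "?q @ [k] \<in> NF"
        using length_pieces_less[OF qk m(1)] A_NF(2) by auto
      then have "?q \<in> NF" using less.hyps[of "?q @ [k]"] by simp
      have "nonincreasing wle ?bq" "?bq \<noteq> [] \<longrightarrow> wle (?q @ [k]) (last ?bq)"
        using A_NF(1) unfolding A_pieces nonincreasing_snoc by auto
      then have "nonincreasing wle (?bq @ [?q])"
        unfolding nonincreasing_snoc using wle_trans[OF wle_snoc] by blast
      moreover have "set ?Q = set ?bq \<union> {?q}"
        using arg_cong[OF Q, of set] by (simp only: set_append list.set)
      then have "\<forall>P\<in>set ?Q. P \<in> NF"
        using \<open>?q \<in> NF\<close> A_NF(2) unfolding A_pieces by auto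
      ultimately show ?thesis by (simp only: Q[symmetric])
    qed
    then show ?thesis using NF_iff_pieces[OF ys] unfolding A by simp
  qed (simp add: NF_Nil)
qed

section \<open>Definability of \<open>W\<^sup>N\<^sub>3\<close>\<close>

definition closed3 :: "word set \<Rightarrow> word \<Rightarrow> bool" where
  "closed3 M y \<longleftrightarrow> (\<exists>z\<in>M. wless z y) \<and> (\<forall>z\<in>M. wless z y \<longrightarrow> wless (diamond 3 z) y)"

definition closed3_formula :: "nat \<Rightarrow> nat \<Rightarrow> fform" where
  "closed3_formula v z = FAnd (FEx z (FLess (FVar z) (FVar v)))
     (FNot (FEx z (FAnd (FLess (FVar z) (FVar v)) (FNot (FLess (FD3 (FVar z)) (FVar v))))))"

definition WN3_formula :: fform where
  "WN3_formula = FEx 1 (FAnd (closed3_formula 1 2) (FAnd (FLess (FVar 0) (FVar 1))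
     (FNot (FEx 3 (FAnd (closed3_formula 3 2) (FLess (FVar 3) (FVar 1)))))))"

lemma fvars_WN3_formula: "fvars WN3_formula \<subseteq> {0}"
  unfolding WN3_formula_def closed3_formula_def by auto

lemma sat_closed3_formula:
  "z \<noteq> v \<Longrightarrow> sat M wless f1 (diamond 3) e (closed3_formula v z) \<longleftrightarrow> closed3 M (e v)"
  unfolding closed3_formula_def closed3_def by auto

lemma sat_WN3_formula:
  "sat M wless f1 (diamond 3) e WN3_formula \<longleftrightarrow>
     (\<exists>y\<in>M. closed3 M y \<and> wless (e 0) y \<and> \<not> (\<exists>y'\<in>M. closed3 M y' \<and> wless y' y))"
  unfolding WN3_formula_def by (simp add: sat_closed3_formula)

lemma WN3_iff: "A \<in> WN 3 \<longleftrightarrow> A \<in> NF \<and> wless A [4]"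
proof -
  have "enat s \<le> 3 \<longleftrightarrow> s < 4" for s
    by (simp add: numeral_eq_enat) arith
  then show ?thesis unfolding WN_def W_def wless_singleton_iff by auto
qed

lemma closed3_four: "[] \<in> M \<Longrightarrow> closed3 M [4]"
  unfolding closed3_def
proof (intro conjI ballI impI)
  show "[] \<in> M \<Longrightarrow> \<exists>z\<in>M. wless z [4]" using wless_Nil[of "[4]"] by blast
  fix z assume "wless z [4]"
  then have "wless (z @ [3]) [4]" unfolding wless_singleton_iff by auto
  then show "wless (diamond 3 z) [4]"
    using wequiv_diamond[of 3 z] wle_wless_trans unfolding wequiv_def by blast
qed

lemma not_closed3_below_four:
  assumes "y \<in> WN \<alpha>" "wless y [4]"
  shows "\<not> closed3 (WN \<alpha>) y"
proof (cases "y = []")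
  case True
  then show ?thesis unfolding closed3_def wless_def by simp
next
  case False
  then obtain z k where y: "y = z @ [k]" by (metis append_butlast_last_id)
  have "y \<in> NF" "y \<in> W \<alpha>" using assms(1) unfolding WN_def by auto
  then have "z \<in> NF" "z \<in> W \<alpha>"
    using NF_butlast[of y] unfolding y W_def by simp_all
  then have "z \<in> WN \<alpha>" unfolding WN_def by simp
  moreover have "wless z y" unfolding y by (rule wless_snoc)
  moreover have "k \<le> 3" using assms(2) unfolding wless_singleton_iff y by auto
  then have "wle y (z @ [3])" unfolding y by (rule wle_snoc_mono)
  then have "wle y (diamond 3 z)"
    using wequiv_diamond[of 3 z] wle_trans unfolding wequiv_def by blast
  ultimately show ?thesis unfolding closed3_def wless_def by blast
qed

lemma WN3_iff_least_closed3:
  assumes "4 \<le> \<alpha>" "A \<in> WN \<alpha>"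
  shows "A \<in> WN 3 \<longleftrightarrow>
    (\<exists>y\<in>WN \<alpha>. closed3 (WN \<alpha>) y \<and> wless A y \<and> \<not> (\<exists>y'\<in>WN \<alpha>. closed3 (WN \<alpha>) y' \<and> wless y' y))"
    (is "_ \<longleftrightarrow> ?rhs")
proof -
  let ?least = "\<lambda>y. closed3 (WN \<alpha>) y \<and> \<not> (\<exists>y'\<in>WN \<alpha>. closed3 (WN \<alpha>) y' \<and> wless y' y)"
  have "[] \<in> WN \<alpha>" unfolding WN_def W_def by (simp add: NF_Nil)
  then have four: "closed3 (WN \<alpha>) [4]" by (rule closed3_four)
  have "[4] \<in> NF"
    using NF_iff_pieces[of "[4]" 4] by (simp add: pieces_snoc_sep[of 4 "[]", simplified] NF_Nil)
  then have "[4] \<in> WN \<alpha>" using assms(1) unfolding WN_def W_def by (simp add: numeral_eq_enat)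
  have least_four: "?least [4]" using four not_closed3_below_four by blast
  have least_eq: "wle y [4]" if "y \<in> WN \<alpha>" "?least y" for y
  proof -
    have "\<not> wless [4] y" using that \<open>[4] \<in> WN \<alpha>\<close> four by blast
    then show ?thesis using wle_total unfolding wless_def by blast
  qed
  show ?thesis
  proof
    assume "A \<in> WN 3"
    then have "wless A [4]" using WN3_iff by blast
    then show ?rhs using \<open>[4] \<in> WN \<alpha>\<close> least_four by blast
  next
    assume ?rhs
    then obtain y where "y \<in> WN \<alpha>" "?least y" "wless A y" by blast
    then have "wless A [4]" using least_eq wless_wle_trans by blast
    then show "A \<in> WN 3" using assms(2) WN3_iff unfolding WN_def by blast
  qed
qed

theorem lemma5:
  fixes \<alpha> :: enat
  assumes "3 \<le> \<alpha>"
  shows "fo_definable (WN \<alpha>) wless (diamond 1) (diamond 3) (WN 3)"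
proof (cases "\<alpha> = 3")
  case True
  show ?thesis unfolding fo_definable_def True
    by (rule exI[of _ "FEq (FVar 0) (FVar 0)"]) simp
next
  case False
  then have "4 \<le> \<alpha>" using assms
    by (cases \<alpha>) (simp_all add: numeral_eq_enat)
  show ?thesis unfolding fo_definable_def
  proof (intro exI[of _ WN3_formula] conjI allI impI)
    show "fvars WN3_formula \<subseteq> {0}" by (rule fvars_WN3_formula)
    fix e :: "nat \<Rightarrow> word" assume "\<forall>x. e x \<in> WN \<alpha>"
    then show "e 0 \<in> WN 3 \<longleftrightarrow> sat (WN \<alpha>) wless (diamond 1) (diamond 3) e WN3_formula"
      unfolding sat_WN3_formula using WN3_iff_least_closed3[OF \<open>4 \<le> \<alpha>\<close>] by blast
  qed
qed

end
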